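(* Let $X$ be an infinite-dimensional separable (real or complex) Banach space and let $A$ be an operator in $X$ satisfying all hypotheses of Theorem 2.1: $A$ is densely defined, $A^r$ is closed for all $r\ge1$, and there are a dense set $X_0\subset\bigcap_n D(A^n)$ and $B:X_0\to X_0$ with $ABx=x$, and $\sum_{n\ge1}A^nx$, $\sum_{n\ge1}B^nx$ unconditionally convergent for all $x\in X_0$. If $A$ is injective and $A^{-1}$ is a bounded linear operator on $X$, then $A^{-1}$ is frequently hypercyclic.
   Context: A series $\sum_k x_k$ converges unconditionally if for every $\varepsilon>0$ there is $N$ with $\|\sum_{k\in F}x_k\|<\varepsilon$ for every finite $F\subset\mathbb{N}$ disjoint from $\{1,\dots,N\}$. An operator $T$ is frequently hypercyclic if there is $f\in D(T)$ with $T^nf\in D(T)$ for all $n\ge1$ such that for every non-empty open $U\subset X$ the set $\{n: T^nf\in U\}$ has positive lower density, where the lower density of $E\subset\mathbb{N}$ is $\liminf_{N}\#(E\cap\{1,\dots,N\})/N$. *)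

theory Defs
  imports "HOL-Analysis.Analysis"
begin

text \<open>An (unbounded) operator in X is a pair (D, A): a linear subspace D = D(A)
  of X and a map A that is linear on D (values outside D are irrelevant).\<close>

definition linear_operator_on :: "'a::real_vector set \<Rightarrow> ('a \<Rightarrow> 'a) \<Rightarrow> bool" where
  "linear_operator_on D A \<longleftrightarrow> subspace D \<and>
     (\<forall>x\<in>D. \<forall>y\<in>D. A (x + y) = A x + A y) \<and>
     (\<forall>c. \<forall>x\<in>D. A (c *\<^sub>R x) = c *\<^sub>R A x)"

fun dom_pow :: "'a set \<Rightarrow> ('a \<Rightarrow> 'a) \<Rightarrow> nat \<Rightarrow> 'a set" where
  "dom_pow D A 0 = UNIV"
| "dom_pow D A (Suc n) = {x \<in> dom_pow D A n. (A ^^ n) x \<in> D}"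

definition closed_power :: "'a::topological_space set \<Rightarrow> ('a \<Rightarrow> 'a) \<Rightarrow> nat \<Rightarrow> bool" where
  "closed_power D A r \<longleftrightarrow> closed {(x, (A ^^ r) x) | x. x \<in> dom_pow D A r}"

text \<open>Unconditional convergence of the series \<Sum>_{k\<ge>1} x_k (index 0 is never used,
  since F disjoint from {1..N} with F \<subseteq> {1,2,...} means F \<subseteq> {N<..}).\<close>

definition unconditionally_convergent :: "(nat \<Rightarrow> 'a::real_normed_vector) \<Rightarrow> bool" where
  "unconditionally_convergent x \<longleftrightarrow>
     (\<forall>\<epsilon>>0. \<exists>N::nat. \<forall>F. finite F \<and> F \<subseteq> {N<..} \<longrightarrow> norm (\<Sum>k\<in>F. x k) < \<epsilon>)"

definition lower_density :: "nat set \<Rightarrow> ereal" where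
  "lower_density E = liminf (\<lambda>N. ereal (real (card (E \<inter> {1..N})) / real N))"

definition frequently_hypercyclic :: "'a::topological_space set \<Rightarrow> ('a \<Rightarrow> 'a) \<Rightarrow> bool" where
  "frequently_hypercyclic D T \<longleftrightarrow>
     (\<exists>f\<in>D. (\<forall>n\<ge>1. (T ^^ n) f \<in> D) \<and>
        (\<forall>U. open U \<and> U \<noteq> {} \<longrightarrow> lower_density {n. (T ^^ n) f \<in> U} > 0))"

end

theory Submission
  imports Defs
begin

(* T = A^-1 is bounded, and T x = T (A (B x)) = B x on X0, so T together with its right inverse A
   satisfies the Frequent Hypercyclicity Criterion: on a dense set both sum T^n x and sum A^n x
   converge unconditionally.
   The criterion is proved by the construction of Bayart and Grivaux.  Fix a dense sequence y_k in
   X0 and a threshold function r growing so fast that all tails beyond r K of the series for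
   y_0, ..., y_K are small.  Choose disjoint sets E_k of positive lower density whose points are
   more than r (max l k) apart.  Then x = sum_l sum_{n in E_l} A^n y_l exists, and for m in E_k
   the vector T^m x - y_k is a sum of tails of these series, of norm at most 4 * 2^-k. *)

section \<open>Sets of positive lower density with large gaps\<close>

definition odd_multiples :: "nat \<Rightarrow> nat set" where
  "odd_multiples P = {n. n mod (2 * P) = P}"

lemma odd_multiples_atMost:
  assumes "0 < P"
  shows "odd_multiples P \<inter> {1..N} = (\<lambda>j. (2 * j + 1) * P) ` {..<(N + P) div (2 * P)}"
proof (intro set_eqI iffI)
  fix n assume n: "n \<in> odd_multiples P \<inter> {1..N}"
  define j where "j = n div (2 * P)"
  have nj: "n = (2 * j + 1) * P"
    using div_mult_mod_eq[of n "2 * P"] n unfolding odd_multiples_def j_def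
    by (simp add: algebra_simps)
  then have "(j + 1) * (2 * P) \<le> N + P" using n by (simp add: algebra_simps)
  then have "j + 1 \<le> (N + P) div (2 * P)" using assms by (simp add: less_eq_div_iff_mult_less_eq)
  then have "j < (N + P) div (2 * P)" by simp
  then show "n \<in> (\<lambda>j. (2 * j + 1) * P) ` {..<(N + P) div (2 * P)}" using nj by blast
next
  fix n assume "n \<in> (\<lambda>j. (2 * j + 1) * P) ` {..<(N + P) div (2 * P)}"
  then obtain j where j: "j < (N + P) div (2 * P)" and nj: "n = (2 * j + 1) * P" by blast
  have "j + 1 \<le> (N + P) div (2 * P)" using j by simp
  then have "(j + 1) * (2 * P) \<le> N + P" using assms by (simp add: less_eq_div_iff_mult_less_eq)
  then have "n \<le> N" using nj by (simp add: algebra_simps)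
  moreover have "n mod (2 * P) = P"
  proof -
    have "n = P + j * (2 * P)" using nj by (simp add: algebra_simps)
    then show ?thesis using assms by simp
  qed
  ultimately show "n \<in> odd_multiples P \<inter> {1..N}"
    using assms nj unfolding odd_multiples_def by auto
qed

lemma card_odd_multiples_atMost:
  assumes "0 < P"
  shows "card (odd_multiples P \<inter> {1..N}) = (N + P) div (2 * P)"
proof -
  have "inj_on (\<lambda>j. (2 * j + 1) * P) {..<(N + P) div (2 * P)}"
    using assms by (auto simp: inj_on_def)
  then show ?thesis unfolding odd_multiples_atMost[OF assms] by (rule trans[OF card_image]) simp
qed

lemma card_odd_multiples_lower:
  assumes "0 < P"
  shows "real N / (2 * P) - 1 \<le> card (odd_multiples P \<inter> {1..N})"
proof -
  define c where "c = (N + P) div (2 * P)"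
  have "N + P = c * (2 * P) + (N + P) mod (2 * P)"
    unfolding c_def by (rule div_mult_mod_eq[symmetric])
  moreover have "(N + P) mod (2 * P) < 2 * P" using assms by simp
  ultimately have "N + P < (c + 1) * (2 * P)" by (simp add: algebra_simps)
  then have "real N < (real c + 1) * (2 * P)"
    by (metis add_lessD1 of_nat_1 of_nat_add of_nat_less_iff of_nat_mult of_nat_numeral)
  then have "real N / (2 * P) < real c + 1" using assms by (simp add: divide_less_eq)
  then show ?thesis using card_odd_multiples_atMost[OF assms, of N] c_def by simp
qed

lemma card_odd_multiples_upper:
  assumes "0 < P"
  shows "card (odd_multiples P \<inter> {1..N}) * P \<le> N"
proof -
  define c where "c = (N + P) div (2 * P)"
  have "c * (2 * P) \<le> N + P" unfolding c_def by (rule div_times_less_eq_dividend)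
  have "c * P \<le> N"
  proof (cases "c = 0")
    case False
    then have "P \<le> c * P" by simp
    moreover have "c * (2 * P) = 2 * (c * P)" by simp
    ultimately show ?thesis using \<open>c * (2 * P) \<le> N + P\<close> by linarith
  qed simp
  then show ?thesis using card_odd_multiples_atMost[OF assms, of N] c_def by simp
qed

lemma odd_multiples_ge: "n \<in> odd_multiples P \<Longrightarrow> P \<le> n"
  unfolding odd_multiples_def by (metis mem_Collect_eq mod_less_eq_dividend)

lemma odd_multiples_gap:
  assumes "n \<in> odd_multiples P" "m \<in> odd_multiples P" "m < n"
  shows "2 * P \<le> n - m"
proof -
  have "n mod (2 * P) = m mod (2 * P)" using assms(1,2) unfolding odd_multiples_def by simp
  then have "2 * P dvd n - m" using assms(3) by (simp add: mod_eq_dvd_iff_nat)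
  then show ?thesis using assms(3) by (simp add: dvd_imp_le)
qed

(* The factor 2^(k+5) makes the points of {1..N} near odd multiples of period r k, summed over
   all k > l, at most N / (8 * period r l): a quarter of the odd multiples of period r l. *)
fun period :: "(nat \<Rightarrow> nat) \<Rightarrow> nat \<Rightarrow> nat" where
  "period r 0 = 2 ^ 5 * (2 * r 0 + 1)"
| "period r (Suc k) = 2 ^ (Suc k + 5) * (2 * r (Suc k) + 1) * period r k"

lemma period_pos: "0 < period r k"
  by (induction k) auto

lemma period_ge: "2 ^ (k + 5) * (2 * r k + 1) \<le> period r k"
proof (cases k)
  case (Suc j)
  have "2 ^ (k + 5) * (2 * r k + 1) * 1 \<le> 2 ^ (k + 5) * (2 * r k + 1) * period r j"
    by (rule mult_le_mono2) (simp add: Suc_le_eq period_pos)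
  then show ?thesis using Suc by simp
qed simp

lemma period_gt: "k + 2 * r k < period r k"
proof -
  have "k < 2 ^ k" by (rule less_exp)
  moreover have "(2::nat) ^ k \<le> 2 ^ (k + 5)" by (rule power_increasing) simp_all
  ultimately have "k + 1 \<le> 2 ^ (k + 5)" by linarith
  then have "(k + 1) * (2 * r k + 1) \<le> 2 ^ (k + 5) * (2 * r k + 1)" by (rule mult_le_mono1)
  moreover have "k + 2 * r k < (k + 1) * (2 * r k + 1)" by (simp add: algebra_simps)
  ultimately show ?thesis using period_ge[of k r] by linarith
qed

lemma period_mono: "l \<le> k \<Longrightarrow> period r l \<le> period r k"
proof (induction k rule: dec_induct)
  case (step k)
  have "1 * period r k \<le> (2 ^ (Suc k + 5) * (2 * r (Suc k) + 1)) * period r k"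
    by (rule mult_le_mono1) (simp add: Suc_le_eq)
  then have "period r k \<le> period r (Suc k)" by (simp only: period.simps mult_1_left)
  then show ?case using step.IH by linarith
qed simp

lemma period_growth:
  assumes "l < k"
  shows "2 ^ (k + 5) * (2 * r k + 1) * period r l \<le> period r k"
proof -
  obtain j where k: "k = Suc j" and "l \<le> j" using assms by (cases k) auto
  from \<open>l \<le> j\<close> have "period r l \<le> period r j" by (rule period_mono)
  then have "2 ^ (k + 5) * (2 * r k + 1) * period r l \<le> 2 ^ (k + 5) * (2 * r k + 1) * period r j"
    by (rule mult_le_mono2)
  then show ?thesis using k by simp
qed

definition separated_set :: "(nat \<Rightarrow> nat) \<Rightarrow> nat \<Rightarrow> nat set" where
  "separated_set r l = {n \<in> odd_multiples (period r l).
     \<forall>k>l. \<forall>m \<in> odd_multiples (period r k). n \<notin> {m - r k..m + r k}}"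

lemma separated_set_gt: "n \<in> separated_set r l \<Longrightarrow> l + 2 * r l < n"
  unfolding separated_set_def using odd_multiples_ge period_gt[of l r] by fastforce

lemma separated_set_disjoint:
  assumes "l \<noteq> k"
  shows "separated_set r l \<inter> separated_set r k = {}"
proof -
  have "separated_set r i \<inter> separated_set r j = {}" if "i < j" for i j
    using that unfolding separated_set_def by fastforce
  then show ?thesis using assms by (metis inf_commute linorder_neqE_nat)
qed

lemma separated_set_gap:
  assumes "n \<in> separated_set r l" "m \<in> separated_set r k" "m < n"
  shows "r (max l k) < n - m"
proof (cases l k rule: linorder_cases)
  case less
  then have "n \<notin> {m - r k..m + r k}" using assms(1,2) unfolding separated_set_def by blast
  then show ?thesis using less assms(3) by auto
next
  case greater
  then have "m \<notin> {n - r l..n + r l}" using assms(1,2) unfolding separated_set_def by blast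
  then show ?thesis using greater assms(3) by auto
next
  case equal
  then have "2 * period r l \<le> n - m"
    using assms odd_multiples_gap unfolding separated_set_def by blast
  then show ?thesis using period_gt[of l r] equal by simp
qed

lemma sum_power_half_le: "finite I \<Longrightarrow> (\<Sum>k\<in>I. (1/2::real) ^ k) \<le> 2"
proof -
  assume "finite I"
  then have "(\<Sum>k\<in>I. (1/2::real) ^ k) \<le> (\<Sum>k. (1/2::real) ^ k)"
    by (intro sum_le_suminf) auto
  also have "\<dots> = 2" by (subst suminf_geometric) auto
  finally show ?thesis .
qed

lemma card_UN_intervals_le:
  assumes "finite S"
  shows "card (\<Union>m\<in>S. {m - a..m + a}) \<le> card S * (2 * a + 1)"
proof -
  have "card (\<Union>m\<in>S. {m - a..m + a}) \<le> (\<Sum>m\<in>S. card {m - a..m + a})"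
    using assms by (rule card_UN_le)
  also have "\<dots> \<le> (\<Sum>m\<in>S. 2 * a + 1)" by (rule sum_mono) simp
  finally show ?thesis by simp
qed

lemma card_near_odd_multiples:
  assumes "l < k"
  shows "card (\<Union>m\<in>odd_multiples (period r k) \<inter> {1..N + r k}. {m - r k..m + r k})
           * 2 ^ (k + 5) * period r l \<le> 2 * N"
proof -
  define S where "S = odd_multiples (period r k) \<inter> {1..N + r k}"
  have card_S: "card S * period r k \<le> 2 * N"
  proof (cases "S = {}")
    case False
    then obtain m where "m \<in> S" by blast
    then have "period r k \<le> N + r k" using odd_multiples_ge unfolding S_def by fastforce
    then have "r k \<le> N" using period_gt[of k r] by linarith
    then show ?thesis
      using card_odd_multiples_upper[OF period_pos, of r k "N + r k"] unfolding S_def by linarith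
  qed simp
  have "card (\<Union>m\<in>S. {m - r k..m + r k}) * 2 ^ (k + 5) * period r l
      \<le> card S * (2 * r k + 1) * 2 ^ (k + 5) * period r l"
    by (intro mult_le_mono1 card_UN_intervals_le) (simp add: S_def)
  also have "\<dots> = card S * (2 ^ (k + 5) * (2 * r k + 1) * period r l)"
    by (simp only: mult.assoc mult.commute mult.left_commute)
  also have "\<dots> \<le> card S * period r k" by (intro mult_le_mono2 period_growth assms)
  finally show ?thesis using card_S unfolding S_def by linarith
qed

lemma card_separated_set_ge:
  assumes "8 * period r l \<le> N"
  shows "real N / (4 * period r l) \<le> card (separated_set r l \<inter> {1..N})"
proof -
  define P where "P = period r l"
  have P: "0 < P" unfolding P_def by (rule period_pos)
  define W where "W k = (\<Union>m\<in>odd_multiples (period r k) \<inter> {1..N + r k}. {m - r k..m + r k})" for k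
  define Bad where "Bad = (\<Union>k\<in>{l<..N}. W k)"
  have good: "odd_multiples P \<inter> {1..N} - Bad \<subseteq> separated_set r l \<inter> {1..N}"
  proof
    fix n assume n: "n \<in> odd_multiples P \<inter> {1..N} - Bad"
    have "n \<notin> {m - r k..m + r k}" if k: "l < k" and m: "m \<in> odd_multiples (period r k)" for k m
    proof
      assume near: "n \<in> {m - r k..m + r k}"
      have "period r k \<le> m" using m by (rule odd_multiples_ge)
      moreover have "m \<le> N + r k" using near n by auto
      moreover note period_gt[of k r] period_pos[of r k]
      ultimately have "k \<le> N" "1 \<le> m" by linarith+
      then have "n \<in> Bad" unfolding Bad_def W_def using k m near \<open>m \<le> N + r k\<close> by force
      then show False using n by blast
    qed
    then show "n \<in> separated_set r l \<inter> {1..N}" using n unfolding separated_set_def P_def by auto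
  qed
  have card_W: "real (card (W k)) \<le> real N / (16 * P) * (1/2) ^ k" if "l < k" for k
  proof -
    have "real (card (W k)) * (2 ^ (k + 5) * P) \<le> 2 * N"
      using of_nat_mono[OF card_near_odd_multiples[OF that, of r N]]
      unfolding W_def P_def by (simp add: mult.assoc)
    then have "real (card (W k)) \<le> 2 * N / (2 ^ (k + 5) * P)" using P by (simp add: pos_le_divide_eq)
    also have "\<dots> = real N / (16 * P) * (1/2) ^ k" by (simp add: power_add power_one_over field_simps)
    finally show ?thesis .
  qed
  have card_Bad: "real (card Bad) \<le> real N / (8 * P)"
  proof -
    have "card Bad \<le> (\<Sum>k\<in>{l<..N}. card (W k))" unfolding Bad_def by (rule card_UN_le) simp
    then have "real (card Bad) \<le> (\<Sum>k\<in>{l<..N}. real (card (W k)))"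
      by (metis of_nat_mono of_nat_sum)
    also have "\<dots> \<le> (\<Sum>k\<in>{l<..N}. real N / (16 * P) * (1/2) ^ k)"
      by (rule sum_mono) (use card_W in auto)
    also have "\<dots> = real N / (16 * P) * (\<Sum>k\<in>{l<..N}. (1/2) ^ k)" by (simp add: sum_distrib_left)
    also have "\<dots> \<le> real N / (16 * P) * 2"
      by (rule mult_left_mono) (use sum_power_half_le[of "{l<..N}"] P in auto)
    finally show ?thesis by simp
  qed
  have "finite Bad" unfolding Bad_def W_def by simp
  then have "card (odd_multiples P \<inter> {1..N}) - card Bad \<le> card (odd_multiples P \<inter> {1..N} - Bad)"
    by (rule diff_card_le_card_Diff)
  also have "\<dots> \<le> card (separated_set r l \<inter> {1..N})" by (intro card_mono good) simp
  finally have "real (card (odd_multiples P \<inter> {1..N}))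
      \<le> real (card (separated_set r l \<inter> {1..N})) + real (card Bad)" by linarith
  moreover have "real N / (2 * P) - 1 \<le> card (odd_multiples P \<inter> {1..N})"
    using card_odd_multiples_lower[OF P, of N] by simp
  moreover have "1 \<le> real N / (8 * P)" using assms P unfolding P_def by (simp add: le_divide_eq)
  moreover have "real N / (2 * P) = real N / (4 * P) + real N / (8 * P) + real N / (8 * P)"
    using P by (simp add: field_simps)
  ultimately show ?thesis using card_Bad unfolding P_def by linarith
qed

lemma lower_density_mono: "E \<subseteq> F \<Longrightarrow> lower_density E \<le> lower_density F"
  unfolding lower_density_def
  by (intro Liminf_mono always_eventually allI ereal_less_eq(3)[THEN iffD2] divide_right_mono
      of_nat_mono card_mono) auto

lemma lower_density_pos:
  assumes "0 < c" and "eventually (\<lambda>N. c * real N \<le> card (E \<inter> {1..N})) sequentially"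
  shows "0 < lower_density E"
proof -
  have "eventually (\<lambda>N. ereal c \<le> ereal (card (E \<inter> {1..N}) / real N)) sequentially"
    using assms(2) eventually_gt_at_top[of 0]
    by eventually_elim (simp add: pos_le_divide_eq)
  then have "ereal c \<le> lower_density E" unfolding lower_density_def by (rule Liminf_bounded)
  then show ?thesis using assms(1) by (metis ereal_less(2) less_le_trans)
qed

lemma lower_density_separated_set: "0 < lower_density (separated_set r l)"
proof (rule lower_density_pos)
  show "0 < 1 / (4 * real (period r l))" using period_pos[of r l] by simp
  show "eventually (\<lambda>N. 1 / (4 * real (period r l)) * real N \<le> card (separated_set r l \<inter> {1..N}))
      sequentially"
    using eventually_ge_at_top[of "8 * period r l"]
    by eventually_elim (use card_separated_set_ge in simp)
qed

section \<open>Interpolating a dense sequence by one orbit\<close>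

lemma bounded_linear_funpow:
  fixes T :: "'a::real_normed_vector \<Rightarrow> 'a"
  assumes "bounded_linear T"
  shows "bounded_linear (T ^^ m)"
proof (induction m)
  case 0
  show ?case using bounded_linear_ident by (simp add: id_def)
next
  case (Suc m)
  have "T ^^ Suc m = (\<lambda>x. T ((T ^^ m) x))" by (rule ext) simp
  then show ?case using bounded_linear_compose[OF assms Suc.IH] by simp
qed

lemma countable_dense_subset:
  fixes X0 :: "'a::metric_space set"
  assumes "separable_space (euclidean :: 'a topology)" and "closure X0 = UNIV"
  obtains C where "countable C" "C \<subseteq> X0" "closure C = UNIV"
proof -
  obtain C0 :: "'a set" where C0: "countable C0" "closure C0 = UNIV"
    using assms(1) unfolding separable_space_def by auto
  define p where "p z j = (SOME q. q \<in> X0 \<and> dist q z < 1 / Suc j)" for z j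
  have p: "p z j \<in> X0 \<and> dist (p z j) z < 1 / Suc j" for z j
  proof -
    have "z \<in> closure X0" using assms(2) by simp
    moreover have "(0::real) < 1 / Suc j" by simp
    ultimately have "\<exists>q. q \<in> X0 \<and> dist q z < 1 / Suc j"
      using closure_approachable[of z X0] by blast
    then show ?thesis unfolding p_def by (rule someI_ex)
  qed
  define C where "C = (\<lambda>(z, j). p z j) ` (C0 \<times> UNIV)"
  have "u \<in> closure C" for u
  proof (rule closure_approachable[THEN iffD2], intro allI impI)
    fix e :: real assume "0 < e"
    have "u \<in> closure C0" using C0(2) by simp
    then obtain z where z: "z \<in> C0" "dist z u < e / 2"
      using closure_approachable[of u C0] \<open>0 < e\<close> half_gt_zero by blast
    obtain j where j: "1 / real (Suc j) < e / 2"
      using \<open>0 < e\<close> by (metis half_gt_zero_iff inverse_eq_divide reals_Archimedean)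
    have "dist (p z j) u < e" using p[of z j] z j dist_triangle[of "p z j" u z] by linarith
    moreover have "p z j \<in> C" using z unfolding C_def by (auto intro: image_eqI[where x="(z, j)"])
    ultimately show "\<exists>x\<in>C. dist x u < e" by blast
  qed
  moreover have "countable C" unfolding C_def using C0(1) by simp
  moreover have "C \<subseteq> X0" unfolding C_def using p by auto
  ultimately show thesis using that by blast
qed

lemma dense_sequence_recurrent:
  fixes X0 :: "'a::metric_space set"
  assumes "separable_space (euclidean :: 'a topology)" and "closure X0 = UNIV"
  obtains y :: "nat \<Rightarrow> 'a" where "range y \<subseteq> X0" and "\<And>u e K. 0 < e \<Longrightarrow> \<exists>k\<ge>K. dist (y k) u < e"
proof -
  obtain C where C: "countable C" "C \<subseteq> X0" "closure C = UNIV"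
    using countable_dense_subset[OF assms] by blast
  then have "C \<noteq> {}" by auto
  define y where "y k = from_nat_into C (fst (prod_decode k))" for k
  have "\<exists>k\<ge>K. dist (y k) u < e" if "0 < e" for u e K
  proof -
    obtain z where z: "z \<in> C" "dist z u < e"
      using closure_approachable[of u C] C(3) \<open>0 < e\<close> by blast
    then obtain i where "from_nat_into C i = z" using from_nat_into_surj[OF C(1)] by blast
    then have "y (prod_encode (i, K)) = z" unfolding y_def by simp
    then show ?thesis using z le_prod_encode_2[of K i] by blast
  qed
  moreover have "range y \<subseteq> X0" unfolding y_def using from_nat_into[OF \<open>C \<noteq> {}\<close>] C(2) by blast
  ultimately show thesis using that by blast
qed

lemma uniform_tail_thresholds:
  fixes x :: "nat \<Rightarrow> nat \<Rightarrow> 'a::real_normed_vector"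
  assumes "\<And>l. unconditionally_convergent (x l)"
  obtains r :: "nat \<Rightarrow> nat" where
    "\<And>K l F. l \<le> K \<Longrightarrow> finite F \<Longrightarrow> F \<subseteq> {r K<..} \<Longrightarrow> norm (sum (x l) F) < (1/2) ^ (K + l)"
proof -
  define N where
    "N l K = (SOME N. \<forall>F. finite F \<and> F \<subseteq> {N<..} \<longrightarrow> norm (sum (x l) F) < (1/2::real) ^ (K + l))"
    for l K
  have N: "norm (sum (x l) F) < (1/2) ^ (K + l)" if "finite F" "F \<subseteq> {N l K<..}" for l K F
  proof -
    have "\<exists>N. \<forall>F. finite F \<and> F \<subseteq> {N<..} \<longrightarrow> norm (sum (x l) F) < (1/2::real) ^ (K + l)"
      using assms unfolding unconditionally_convergent_def by simp
    from someI_ex[OF this] show ?thesis using that unfolding N_def by blast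
  qed
  define r where "r K = (\<Sum>l\<le>K. N l K)" for K
  show thesis
  proof (rule that)
    fix K l F assume "l \<le> K" "finite F" "F \<subseteq> {r K<..}"
    have "N l K \<le> r K" unfolding r_def using \<open>l \<le> K\<close> by (intro member_le_sum) simp_all
    then have "F \<subseteq> {N l K<..}" using \<open>F \<subseteq> {r K<..}\<close> by auto
    then show "norm (sum (x l) F) < (1/2) ^ (K + l)" using \<open>finite F\<close> by (rule N[rotated])
  qed
qed

lemma norm_sum_blocks_le:
  fixes \<phi> :: "nat \<Rightarrow> 'a::real_normed_vector"
  assumes disj: "\<And>l k. l \<noteq> k \<Longrightarrow> E l \<inter> E k = {}" and gt: "\<And>l n. n \<in> E l \<Longrightarrow> l < n"
    and supp: "\<And>n. n \<in> F \<Longrightarrow> \<phi> n \<noteq> 0 \<Longrightarrow> \<exists>l. n \<in> E l" and "finite F"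
    and block: "\<And>l. norm (sum \<phi> (F \<inter> E l)) \<le> c * (1/2) ^ l"
  shows "norm (sum \<phi> F) \<le> 2 * c"
proof -
  obtain M where M: "F \<subseteq> {..<M}" using \<open>finite F\<close> finite_nat_iff_bounded by auto
  have "sum \<phi> F = sum \<phi> (\<Union>l<M. F \<inter> E l)"
  proof (rule sum.mono_neutral_right[OF \<open>finite F\<close>])
    show "\<forall>n\<in>F - (\<Union>l<M. F \<inter> E l). \<phi> n = 0" using supp gt M by fastforce
  qed auto
  also have "\<dots> = (\<Sum>l<M. sum \<phi> (F \<inter> E l))"
    by (rule sum.UNION_disjoint) (use \<open>finite F\<close> disj in auto)
  finally have "norm (sum \<phi> F) \<le> (\<Sum>l<M. norm (sum \<phi> (F \<inter> E l)))" by (simp add: norm_sum)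
  also have "\<dots> \<le> (\<Sum>l<M. c * (1/2) ^ l)" by (rule sum_mono) (rule block)
  also have "\<dots> = c * (\<Sum>l<M. (1/2) ^ l)" by (simp add: sum_distrib_left)
  also have "\<dots> \<le> c * 2"
  proof (intro mult_left_mono sum_power_half_le)
    show "0 \<le> c" using order_trans[OF norm_ge_zero block[of 0]] by simp
  qed simp
  finally show ?thesis by simp
qed

locale orbit_interpolation =
  fixes T S :: "'a::banach \<Rightarrow> 'a" and y :: "nat \<Rightarrow> 'a" and E :: "nat \<Rightarrow> nat set"
    and r :: "nat \<Rightarrow> nat"
  assumes T_linear: "bounded_linear T"
    and T_S: "\<And>l n. T ((S ^^ Suc n) (y l)) = (S ^^ n) (y l)"
    and S_tail: "\<And>K l F. l \<le> K \<Longrightarrow> finite F \<Longrightarrow> F \<subseteq> {r K<..} \<Longrightarrow>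
      norm (\<Sum>n\<in>F. (S ^^ n) (y l)) < (1/2) ^ (K + l)"
    and T_tail: "\<And>K l F. l \<le> K \<Longrightarrow> finite F \<Longrightarrow> F \<subseteq> {r K<..} \<Longrightarrow>
      norm (\<Sum>n\<in>F. (T ^^ n) (y l)) < (1/2) ^ (K + l)"
    and E_disjoint: "\<And>l k. l \<noteq> k \<Longrightarrow> E l \<inter> E k = {}"
    and E_gt: "\<And>l n. n \<in> E l \<Longrightarrow> l < n \<and> r l < n"
    and E_gap: "\<And>l k n m. n \<in> E l \<Longrightarrow> m \<in> E k \<Longrightarrow> m < n \<Longrightarrow> r (max l k) < n - m"
begin

lemma T_pow_S_pow: "m \<le> n \<Longrightarrow> (T ^^ m) ((S ^^ n) (y l)) = (S ^^ (n - m)) (y l)"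
proof (induction m)
  case (Suc m)
  then have n: "n - m = Suc (n - Suc m)" by simp
  have "(T ^^ Suc m) ((S ^^ n) (y l)) = T ((S ^^ (n - m)) (y l))" using Suc by simp
  also have "\<dots> = (S ^^ (n - Suc m)) (y l)" unfolding n by (rule T_S)
  finally show ?case .
qed simp

lemma T_pow_S_pow_ge: "n \<le> m \<Longrightarrow> (T ^^ m) ((S ^^ n) (y l)) = (T ^^ (m - n)) (y l)"
proof -
  assume "n \<le> m"
  then have "(T ^^ m) ((S ^^ n) (y l)) = (T ^^ (m - n)) ((T ^^ n) ((S ^^ n) (y l)))"
    by (metis funpow_add le_add_diff_inverse2 o_apply)
  then show ?thesis using T_pow_S_pow[of n n] by simp
qed

lemma S_tail_reindex:
  assumes "l \<le> K" "finite G" "inj_on g G" "g ` G \<subseteq> {r K<..}"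
  shows "norm (\<Sum>n\<in>G. (S ^^ g n) (y l)) < (1/2) ^ (K + l)"
  using S_tail[OF assms(1) finite_imageI[OF assms(2)] assms(4)]
  by (simp add: sum.reindex[OF assms(3)])

lemma T_tail_reindex:
  assumes "l \<le> K" "finite G" "inj_on g G" "g ` G \<subseteq> {r K<..}"
  shows "norm (\<Sum>n\<in>G. (T ^^ g n) (y l)) < (1/2) ^ (K + l)"
  using T_tail[OF assms(1) finite_imageI[OF assms(2)] assms(4)]
  by (simp add: sum.reindex[OF assms(3)])

definition summand :: "nat \<Rightarrow> 'a" where
  "summand n = (if \<exists>l. n \<in> E l then (S ^^ n) (y (THE l. n \<in> E l)) else 0)"

lemma summand_in: "n \<in> E l \<Longrightarrow> summand n = (S ^^ n) (y l)"
proof -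
  assume n: "n \<in> E l"
  then have "(THE l. n \<in> E l) = l" using E_disjoint by blast
  then show ?thesis using n unfolding summand_def by auto
qed

lemma summand_nonzero: "summand n \<noteq> 0 \<Longrightarrow> \<exists>l. n \<in> E l"
  unfolding summand_def by presburger

lemma norm_sum_summand_block:
  assumes "finite F" "F \<subseteq> {r K<..}"
  shows "norm (sum summand (F \<inter> E l)) \<le> (1/2) ^ K * (1/2) ^ l"
proof -
  have eq: "sum summand (F \<inter> E l) = (\<Sum>n\<in>F \<inter> E l. (S ^^ n) (y l))"
    by (rule sum.cong) (simp_all add: summand_in)
  show ?thesis
  proof (cases "l \<le> K")
    case True
    have "F \<inter> E l \<subseteq> {r K<..}" using assms(2) by blast
    then show ?thesis
      using S_tail[OF True, of "F \<inter> E l"] assms(1) by (simp add: eq power_add)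
  next
    case False
    have "F \<inter> E l \<subseteq> {r l<..}" using E_gt by auto
    then have "norm (sum summand (F \<inter> E l)) < (1/2) ^ (l + l)"
      using S_tail[of l l "F \<inter> E l"] assms(1) unfolding eq by simp
    moreover have "(1/2::real) ^ (l + l) \<le> (1/2) ^ K * (1/2) ^ l"
      unfolding power_add[symmetric] using False by (intro power_decreasing) auto
    ultimately show ?thesis by linarith
  qed
qed

lemma summable_summand: "summable summand"
  unfolding summable_Cauchy
proof (intro allI impI)
  fix e :: real assume "0 < e"
  then obtain K where K: "(1/2::real) ^ K < e / 2" using real_arch_pow_inv[of "e / 2" "1/2"] by auto
  have "norm (sum summand {m..<n}) < e" if "Suc (r K) \<le> m" for m n
  proof -
    have "norm (sum summand {m..<n}) \<le> 2 * (1/2) ^ K"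
    proof (rule norm_sum_blocks_le[OF E_disjoint])
      show "norm (sum summand ({m..<n} \<inter> E l)) \<le> (1/2) ^ K * (1/2) ^ l" for l
        using that by (intro norm_sum_summand_block) auto
    qed (use E_gt summand_nonzero in auto)
    then show ?thesis using K by linarith
  qed
  then show "\<exists>N. \<forall>m\<ge>N. \<forall>n. norm (sum summand {m..<n}) < e" by blast
qed

definition interpolant :: 'a where
  "interpolant = suminf summand"

(* Applying T^m to the term S^n y_l of the interpolant gives a term of a tail of sum S^j y_l if
   n > m and of sum T^j y_l if n < m; the gaps of E put both tails beyond r (max l k). *)
lemma norm_sum_shifted_block:
  assumes "m \<in> E k" "finite F" "m \<notin> F"
  shows "norm (\<Sum>n\<in>F \<inter> E l. (T ^^ m) (summand n)) \<le> 2 * (1/2) ^ (k + l)"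
proof -
  define G1 where "G1 = {n \<in> F \<inter> E l. m < n}"
  define G2 where "G2 = {n \<in> F \<inter> E l. n < m}"
  have fin: "finite G1" "finite G2" using assms(2) unfolding G1_def G2_def by simp_all
  have split: "F \<inter> E l = G1 \<union> G2" "G1 \<inter> G2 = {}"
    using assms(3) unfolding G1_def G2_def by (auto, metis linorder_neqE_nat)
  have gap: "r (max l k) < n - m" if "n \<in> G1" for n using that assms(1) E_gap unfolding G1_def by blast
  have gap': "r (max l k) < m - n" if "n \<in> G2" for n
    using that assms(1) E_gap[of m k n l] unfolding G2_def by (simp add: max.commute)
  have "(\<Sum>n\<in>G1. (T ^^ m) (summand n)) = (\<Sum>n\<in>G1. (S ^^ (n - m)) (y l))"
    by (rule sum.cong) (auto simp: G1_def summand_in T_pow_S_pow)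
  also have "norm \<dots> < (1/2) ^ (max l k + l)"
    using gap by (intro S_tail_reindex fin) (auto simp: inj_on_def G1_def)
  finally have G1_bound: "norm (\<Sum>n\<in>G1. (T ^^ m) (summand n)) < (1/2) ^ (max l k + l)" .
  have "(\<Sum>n\<in>G2. (T ^^ m) (summand n)) = (\<Sum>n\<in>G2. (T ^^ (m - n)) (y l))"
    by (rule sum.cong) (auto simp: G2_def summand_in T_pow_S_pow_ge)
  also have "norm \<dots> < (1/2) ^ (max l k + l)"
    using gap' by (intro T_tail_reindex fin) (auto simp: inj_on_def G2_def)
  finally have G2_bound: "norm (\<Sum>n\<in>G2. (T ^^ m) (summand n)) < (1/2) ^ (max l k + l)" .
  have "(1/2::real) ^ (max l k + l) \<le> (1/2) ^ (k + l)" by (intro power_decreasing) auto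
  moreover have "norm (\<Sum>n\<in>F \<inter> E l. (T ^^ m) (summand n))
      \<le> norm (\<Sum>n\<in>G1. (T ^^ m) (summand n)) + norm (\<Sum>n\<in>G2. (T ^^ m) (summand n))"
    unfolding split(1) sum.union_disjoint[OF fin split(2)] by (rule norm_triangle_ineq)
  ultimately show ?thesis using G1_bound G2_bound by linarith
qed

lemma norm_orbit_interpolant_diff:
  assumes "m \<in> E k"
  shows "norm ((T ^^ m) interpolant - y k) \<le> 4 * (1/2) ^ k"
proof -
  let ?R = "T ^^ m"
  have R_linear: "bounded_linear ?R" by (rule bounded_linear_funpow[OF T_linear])
  define h where "h n = (if n = m then 0 else ?R (summand n))" for n
  have R_sums: "(\<lambda>n. ?R (summand n)) sums ?R interpolant"
    unfolding interpolant_def by (rule bounded_linear.sums[OF R_linear summable_sums[OF summable_summand]])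
  have "h = (\<lambda>n. ?R (summand n) - (if n = m then ?R (summand m) else 0))"
    unfolding h_def by auto
  then have "h sums (?R interpolant - ?R (summand m))"
    using sums_diff[OF R_sums sums_single[of m "\<lambda>_. ?R (summand m)"]] by simp
  moreover have "?R (summand m) = y k" using assms by (simp add: summand_in T_pow_S_pow)
  ultimately have h_sums: "(\<lambda>M. sum h {..<M}) \<longlonglongrightarrow> ?R interpolant - y k"
    unfolding sums_def by simp
  have "norm (sum h {..<M}) \<le> 2 * (2 * (1/2) ^ k)" for M
  proof (rule norm_sum_blocks_le[OF E_disjoint])
    show "\<exists>l. n \<in> E l" if "h n \<noteq> 0" for n
      using that summand_nonzero linear_simps(3)[OF R_linear] unfolding h_def by metis
    show "norm (sum h ({..<M} \<inter> E l)) \<le> 2 * (1/2) ^ k * (1/2) ^ l" for l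
    proof -
      have "sum h ({..<M} \<inter> E l) = sum h (({..<M} - {m}) \<inter> E l)"
        by (rule sum.mono_neutral_right) (auto simp: h_def)
      also have "\<dots> = (\<Sum>n\<in>({..<M} - {m}) \<inter> E l. ?R (summand n))"
        by (rule sum.cong) (auto simp: h_def)
      finally have "sum h ({..<M} \<inter> E l) = (\<Sum>n\<in>({..<M} - {m}) \<inter> E l. ?R (summand n))" .
      then show ?thesis
        using norm_sum_shifted_block[OF assms, of "{..<M} - {m}" l] by (simp add: power_add)
    qed
  qed (use E_gt in auto)
  then show ?thesis by (intro LIMSEQ_le_const2[OF tendsto_norm[OF h_sums]]) simp
qed

end

section \<open>The Frequent Hypercyclicity Criterion\<close>

lemma frequently_hypercyclicI:
  fixes T :: "'a::metric_space \<Rightarrow> 'a"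
  assumes y_dense: "\<And>u e K. 0 < e \<Longrightarrow> \<exists>k\<ge>K. dist (y k) u < e"
    and E_density: "\<And>k. 0 < lower_density (E k)"
    and approx: "\<And>k m. m \<in> E k \<Longrightarrow> dist ((T ^^ m) x) (y k) \<le> \<delta> k"
    and "\<delta> \<longlonglongrightarrow> 0"
  shows "frequently_hypercyclic UNIV T"
proof -
  have "0 < lower_density {n. (T ^^ n) x \<in> U}" if "open U" "U \<noteq> {}" for U
  proof -
    obtain u e where "0 < e" and ball: "ball u e \<subseteq> U"
      using \<open>open U\<close> \<open>U \<noteq> {}\<close> open_contains_ball by blast
    then obtain K where K: "\<And>k. K \<le> k \<Longrightarrow> \<delta> k < e / 2"
      using order_tendstoD(2)[OF \<open>\<delta> \<longlonglongrightarrow> 0\<close>, of "e / 2"] by (auto simp: eventually_sequentially)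
    obtain k where k: "K \<le> k" "dist (y k) u < e / 2" using y_dense \<open>0 < e\<close> half_gt_zero by blast
    have "(T ^^ m) x \<in> U" if "m \<in> E k" for m
    proof -
      have "dist ((T ^^ m) x) u \<le> dist ((T ^^ m) x) (y k) + dist (y k) u" by (rule dist_triangle)
      also have "\<dots> < e" using approx[OF that] K[OF k(1)] k(2) by linarith
      finally show ?thesis using ball by (auto simp: dist_commute)
    qed
    then have "E k \<subseteq> {n. (T ^^ n) x \<in> U}" by blast
    then show ?thesis using E_density[of k] lower_density_mono by (meson less_le_trans)
  qed
  then show ?thesis unfolding frequently_hypercyclic_def by auto
qed

theorem frequent_hypercyclicity_criterion:
  fixes T S :: "'a::banach \<Rightarrow> 'a" and X0 :: "'a set"
  assumes "separable_space (euclidean :: 'a topology)" and "closure X0 = UNIV"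
    and "bounded_linear T"
    and T_S: "\<And>x n. x \<in> X0 \<Longrightarrow> T ((S ^^ Suc n) x) = (S ^^ n) x"
    and unc_S: "\<And>x. x \<in> X0 \<Longrightarrow> unconditionally_convergent (\<lambda>n. (S ^^ n) x)"
    and unc_T: "\<And>x. x \<in> X0 \<Longrightarrow> unconditionally_convergent (\<lambda>n. (T ^^ n) x)"
  shows "frequently_hypercyclic UNIV T"
proof -
  obtain y :: "nat \<Rightarrow> 'a" where y: "range y \<subseteq> X0"
    and y_dense: "\<And>u e K. 0 < e \<Longrightarrow> \<exists>k\<ge>K. dist (y k) u < e"
    using dense_sequence_recurrent[OF assms(1,2)] by blast
  obtain rS :: "nat \<Rightarrow> nat" where rS: "\<And>K l F. l \<le> K \<Longrightarrow> finite F \<Longrightarrow> F \<subseteq> {rS K<..} \<Longrightarrow>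
      norm (\<Sum>n\<in>F. (S ^^ n) (y l)) < (1/2) ^ (K + l)"
    using uniform_tail_thresholds[of "\<lambda>l n. (S ^^ n) (y l)"] unc_S y by (metis range_subsetD)
  obtain rT :: "nat \<Rightarrow> nat" where rT: "\<And>K l F. l \<le> K \<Longrightarrow> finite F \<Longrightarrow> F \<subseteq> {rT K<..} \<Longrightarrow>
      norm (\<Sum>n\<in>F. (T ^^ n) (y l)) < (1/2) ^ (K + l)"
    using uniform_tail_thresholds[of "\<lambda>l n. (T ^^ n) (y l)"] unc_T y by (metis range_subsetD)
  define r where "r K = max (rS K) (rT K)" for K
  interpret orbit_interpolation T S y "separated_set r" r
  proof (rule orbit_interpolation.intro)
    show "bounded_linear T" by fact
    show "T ((S ^^ Suc n) (y l)) = (S ^^ n) (y l)" for l n using T_S y by blast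
    show "separated_set r l \<inter> separated_set r k = {}" if "l \<noteq> k" for l k
      using that by (rule separated_set_disjoint)
    show "n \<in> separated_set r l \<Longrightarrow> m \<in> separated_set r k \<Longrightarrow> m < n \<Longrightarrow> r (max l k) < n - m"
      for l k n m by (rule separated_set_gap)
    show "norm (\<Sum>n\<in>F. (S ^^ n) (y l)) < (1/2) ^ (K + l)"
      if "l \<le> K" "finite F" "F \<subseteq> {r K<..}" for K l F
      using that(3) by (intro rS[OF that(1,2)]) (auto simp: r_def)
    show "norm (\<Sum>n\<in>F. (T ^^ n) (y l)) < (1/2) ^ (K + l)"
      if "l \<le> K" "finite F" "F \<subseteq> {r K<..}" for K l F
      using that(3) by (intro rT[OF that(1,2)]) (auto simp: r_def)
    show "n \<in> separated_set r l \<Longrightarrow> l < n \<and> r l < n" for l n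
      using separated_set_gt[of n r l] by simp
  qed
  show ?thesis
  proof (rule frequently_hypercyclicI[where E = "separated_set r" and x = interpolant
        and \<delta> = "\<lambda>k. 4 * (1/2) ^ k"])
    show "\<exists>k\<ge>K. dist (y k) u < e" if "0 < e" for u e K using that by (rule y_dense)
    show "0 < lower_density (separated_set r k)" for k by (rule lower_density_separated_set)
    show "dist ((T ^^ m) interpolant) (y k) \<le> 4 * (1/2) ^ k" if "m \<in> separated_set r k" for k m
      using norm_orbit_interpolant_diff[OF that] by (simp add: dist_norm)
    show "(\<lambda>k. 4 * (1/2::real) ^ k) \<longlonglongrightarrow> 0"
      by (intro tendsto_mult_right_zero LIMSEQ_power_zero) simp
  qed
qed

theorem corollary2p3:
  fixes D :: "'a::banach set" and A :: "'a \<Rightarrow> 'a"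
    and X0 :: "'a set" and B :: "'a \<Rightarrow> 'a" and T :: "'a \<Rightarrow> 'a"
  assumes sep: "separable_space (euclidean :: 'a topology)"
    and infdim: "\<not> (\<exists>S :: 'a set. finite S \<and> span S = UNIV)"
    and op: "linear_operator_on D A"
    and dense_dom: "closure D = UNIV"
    and closed_pow: "\<And>r. r \<ge> 1 \<Longrightarrow> closed_power D A r"
    and X0_sub: "X0 \<subseteq> (\<Inter>n. dom_pow D A n)"
    and X0_dense: "closure X0 = UNIV"
    and B_maps: "\<And>x. x \<in> X0 \<Longrightarrow> B x \<in> X0"
    and AB: "\<And>x. x \<in> X0 \<Longrightarrow> A (B x) = x"
    and uncA: "\<And>x. x \<in> X0 \<Longrightarrow> unconditionally_convergent (\<lambda>n. (A ^^ n) x)"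
    and uncB: "\<And>x. x \<in> X0 \<Longrightarrow> unconditionally_convergent (\<lambda>n. (B ^^ n) x)"
    and inj: "inj_on A D"
    and T_bounded: "bounded_linear T"
    and T_right: "\<And>x. T x \<in> D \<and> A (T x) = x"
    and T_left: "\<And>x. x \<in> D \<Longrightarrow> T (A x) = x"
  shows "frequently_hypercyclic UNIV T"
proof (rule frequent_hypercyclicity_criterion[OF sep X0_dense T_bounded _ uncA])
  have A_pow_D: "(A ^^ n) x \<in> D" if "x \<in> X0" for x n
    using X0_sub that dom_pow.simps(2)[of D A n] by blast
  show "T ((A ^^ Suc n) x) = (A ^^ n) x" if "x \<in> X0" for x n
    using T_left[OF A_pow_D[OF that]] by simp
  have T_B: "T x = B x" if "x \<in> X0" for x
    using T_left[OF A_pow_D[OF B_maps[OF that], of 0]] AB[OF that] by simp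
  have "(T ^^ n) x = (B ^^ n) x \<and> (B ^^ n) x \<in> X0" if "x \<in> X0" for x n
    by (induction n) (simp_all add: that T_B B_maps)
  then show "unconditionally_convergent (\<lambda>n. (T ^^ n) x)" if "x \<in> X0" for x
    using uncB[OF that] that by simp
qed

end
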